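(* Let $\mathbf A\in\mathcal S_{++}^n$, and let $(\mathbf W(t),\mathbf M(t))$ be a solution of the ODE $(\ast)$ with $\tau=\tfrac12$ and initial condition $(\mathbf W_0,\mathbf M_0)\in\mathcal D$. Then, for all $t\ge 0$, $$L(\mathbf W(t),\mathbf M(t))=L(\mathbf W_0,\mathbf M_0)\,e^{-8t}.$$
   Context: Let $n>k\ge1$ be integers. $\mathcal S_{++}^m$ denotes the $m\times m$ symmetric positive definite matrices; $\mathbf A\in\mathcal S_{++}^n$, and $\mathcal D:=\mathbb R^{k\times n}\times\mathcal S_{++}^k$. For a parameter $\tau>0$, consider the ODE $(\ast)$ on $\mathcal D$: $$\tfrac12\tfrac{d\mathbf W}{dt}=\mathbf M^{-1}\mathbf W\mathbf A-\mathbf W,\qquad \tau\tfrac{d\mathbf M}{dt}=\mathbf M^{-1}\mathbf W\mathbf A\mathbf W^\top\mathbf M^{-1}-\mathbf M.$$ A solution is a continuously differentiable map $[0,\infty)\to\mathcal D$ satisfying $(\ast)$. Define $L(\mathbf W,\mathbf M):=\|\mathbf W\mathbf W^\top-\mathbf M^2\|^2=\operatorname{tr}[(\mathbf W\mathbf W^\top-\mathbf M^2)^2]$, where $\|\cdot\|$ is the Frobenius norm. *)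

theory Defs
  imports "HOL-Analysis.Analysis"
begin

definition spd :: "real^'m^'m \<Rightarrow> bool" where
  "spd M \<longleftrightarrow> transpose M = M \<and> (\<forall>x. x \<noteq> 0 \<longrightarrow> x \<bullet> (M *v x) > 0)"

definition Lfun :: "real^'n^'k \<Rightarrow> real^'k^'k \<Rightarrow> real" where
  "Lfun W M = trace ((W ** transpose W - M ** M) ** (W ** transpose W - M ** M))"

end

theory Submission
  imports Defs
begin

text \<open>Put G = W W^T - M^2. Substituting the flow with tau = 1/2 into dG/dt, the terms
  containing M^-1 W A W^T and W A W^T M^-1 cancel between the W- and the M-part, and
  dG/dt = -4 G remains. Hence G(t) = exp(-4t) G(0), and L = tr(G^2) decays like exp(-8t).\<close>

lemma bounded_bilinear_matrix_mult:
  "bounded_bilinear (\<lambda>(X::real^'n^'m) (Y::real^'p^'n). X ** Y)"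
  unfolding bilinear_conv_bounded_bilinear[symmetric] bilinear_def
  by (auto intro!: linearI simp: matrix_matrix_mult_def vec_eq_iff
      sum.distrib[symmetric] sum_distrib_left field_simps)

lemma bounded_linear_transpose: "bounded_linear (transpose :: real^'n^'m \<Rightarrow> real^'m^'n)"
  unfolding linear_conv_bounded_linear[symmetric]
  by (auto intro!: linearI simp: transpose_def vec_eq_iff)

lemma has_vector_derivative_transpose:
  fixes F :: "real \<Rightarrow> real^'n^'m"
  assumes "(F has_vector_derivative F') (at t within S)"
  shows "((\<lambda>t. transpose (F t)) has_vector_derivative transpose F') (at t within S)"
  using bounded_linear.has_vector_derivative[OF bounded_linear_transpose assms] .

lemma has_vector_derivative_matrix_mult:
  fixes F :: "real \<Rightarrow> real^'n^'m" and G :: "real \<Rightarrow> real^'p^'n"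
  assumes "(F has_vector_derivative F') (at t within S)"
    and "(G has_vector_derivative G') (at t within S)"
  shows "((\<lambda>t. F t ** G t) has_vector_derivative F t ** G' + F' ** G t) (at t within S)"
  using bounded_bilinear.has_vector_derivative[OF bounded_bilinear_matrix_mult assms] .

lemma matrix_diff_ldistrib: "(A::'a::ring_1^'n^'m) ** (B - C) = A ** B - A ** C"
  by (vector matrix_matrix_mult_def sum_subtractf[symmetric] algebra_simps)

lemma matrix_diff_rdistrib: "((A::'a::ring_1^'n^'m) - B) ** C = A ** C - B ** C"
  by (vector matrix_matrix_mult_def sum_subtractf[symmetric] algebra_simps)

lemma transpose_diff: "transpose ((A::'a::ab_group_add^'n^'m) - B) = transpose A - transpose B"
  by (simp add: transpose_def vec_eq_iff)

lemma trace_scaleR: "trace (c *\<^sub>R (A::real^'n^'n)) = c * trace A"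
  by (simp add: trace_def sum_distrib_left)

lemma spd_invertible:
  assumes "spd (M::real^'n^'n)"
  shows "invertible M"
proof -
  have "inj ((*v) M)"
  proof (rule injI)
    fix x y assume "M *v x = M *v y"
    then have "M *v (x - y) = 0" by (simp add: matrix_vector_mult_diff_distrib)
    then show "x = y"
      using assms unfolding spd_def by (metis inner_zero_right less_irrefl right_minus_eq)
  qed
  then show ?thesis
    using matrix_left_invertible_injective invertible_left_inverse by blast
qed

lemma matrix_mul_matrix_inv:
  assumes "invertible (M::'a::semiring_1^'n^'m)"
  shows "M ** matrix_inv M = mat 1" and "matrix_inv M ** M = mat 1"
  using someI_ex[OF assms[unfolded invertible_def]] by (auto simp: matrix_inv_def)

lemma symmetric_matrix_inv:
  fixes M :: "real^'n^'n"
  assumes "invertible M" and "transpose M = M"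
  shows "transpose (matrix_inv M) = matrix_inv M"
proof -
  have "transpose (matrix_inv M) ** M = mat 1"
    by (metis assms matrix_mul_matrix_inv(1) matrix_transpose_mul transpose_mat)
  then have "transpose (matrix_inv M) ** M ** matrix_inv M = matrix_inv M"
    by simp
  then show ?thesis
    by (simp add: assms(1) matrix_mul_matrix_inv(1) flip: matrix_mul_assoc)
qed

lemma has_vector_derivative_scaleR_self_eq_exp:
  fixes D :: "real \<Rightarrow> 'a::real_normed_vector"
  assumes D': "\<And>t. t \<ge> 0 \<Longrightarrow> (D has_vector_derivative c *\<^sub>R D t) (at t within {0..})"
    and "t \<ge> 0"
  shows "D t = exp (c * t) *\<^sub>R D 0"
proof -
  define E where "E t = exp (- c * t) *\<^sub>R D t" for t
  have "(E has_vector_derivative 0) (at t within {0..})" if "t \<in> {0..}" for t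
  proof -
    have "((\<lambda>t. exp (- c * t)) has_real_derivative exp (- c * t) * - c) (at t within {0..})"
      by (auto intro!: derivative_eq_intros)
    from has_vector_derivative_scaleR[OF this D'] that show ?thesis
      by (simp add: E_def[abs_def] algebra_simps)
  qed
  then obtain e where "\<And>t. t \<in> {0..} \<Longrightarrow> E t = e"
    using has_vector_derivative_zero_constant[OF convex_real_interval(1)] by blast
  then have "E t = E 0" using \<open>t \<ge> 0\<close> by simp
  also have "E 0 = D 0" by (simp add: E_def)
  finally have "E t = D 0" .
  moreover have "D t = exp (c * t) *\<^sub>R E t"
    by (simp add: E_def flip: exp_add)
  ultimately show ?thesis by simp
qed

definition gram_gap :: "real^'n^'k \<Rightarrow> real^'k^'k \<Rightarrow> real^'k^'k" where
  "gram_gap W M = W ** transpose W - M ** M"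

lemma Lfun_gram_gap: "Lfun W M = trace (gram_gap W M ** gram_gap W M)"
  by (simp add: Lfun_def gram_gap_def)

lemma has_vector_derivative_gram_gap:
  assumes "(W has_vector_derivative W') (at t within S)"
    and "(M has_vector_derivative M') (at t within S)"
  shows "((\<lambda>t. gram_gap (W t) (M t)) has_vector_derivative
           W t ** transpose W' + W' ** transpose (W t) - (M t ** M' + M' ** M t)) (at t within S)"
  unfolding gram_gap_def
  by (intro has_vector_derivative_diff has_vector_derivative_matrix_mult
      has_vector_derivative_transpose assms)

lemma gram_gap_flow_identity:
  fixes W W' :: "real^'n^'k" and A :: "real^'n^'n" and M M' P :: "real^'k^'k"
  assumes A: "transpose A = A"
    and P: "M ** P = mat 1" "P ** M = mat 1" "transpose P = P"
    and W': "W' = 2 *\<^sub>R (P ** W ** A - W)"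
    and M': "M' = 2 *\<^sub>R (P ** W ** A ** transpose W ** P - M)"
  shows "W ** transpose W' + W' ** transpose W - (M ** M' + M' ** M) = - 4 *\<^sub>R gram_gap W M"
proof -
  have cancel: "M ** (P ** X) = X" "X ** P ** M = X" for X :: "real^'k^'k"
    by (simp_all add: matrix_mul_assoc P flip: matrix_mul_assoc[of X])
  show ?thesis
    unfolding W' M' gram_gap_def
    by (simp add: transpose_diff transpose_scalar matrix_transpose_mul A P matrix_diff_ldistrib
        matrix_diff_rdistrib matrix_scalar_ac cancel matrix_mul_assoc scaleR_diff_right
        flip: scalar_matrix_assoc)
qed

theorem lemma2:
  fixes A :: "real^'n^'n"
    and W W' :: "real \<Rightarrow> real^'n^'k"
    and M M' :: "real \<Rightarrow> real^'k^'k"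
    and \<tau> :: real
  assumes dims: "CARD('k) < CARD('n)"
    and A_spd: "spd A"
    and tau: "\<tau> = 1/2"
    and M_spd: "\<And>t. t \<ge> 0 \<Longrightarrow> spd (M t)"
    and W_deriv: "\<And>t. t \<ge> 0 \<Longrightarrow> (W has_vector_derivative W' t) (at t within {0..})"
    and M_deriv: "\<And>t. t \<ge> 0 \<Longrightarrow> (M has_vector_derivative M' t) (at t within {0..})"
    and W'_cont: "continuous_on {0..} W'"
    and M'_cont: "continuous_on {0..} M'"
    and W_ode: "\<And>t. t \<ge> 0 \<Longrightarrow>
       (1/2) *\<^sub>R W' t = matrix_inv (M t) ** W t ** A - W t"
    and M_ode: "\<And>t. t \<ge> 0 \<Longrightarrow>
       \<tau> *\<^sub>R M' t = matrix_inv (M t) ** W t ** A ** transpose (W t) ** matrix_inv (M t) - M t"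
  shows "\<forall>t\<ge>0. Lfun (W t) (M t) = Lfun (W 0) (M 0) * exp (- 8 * t)"
proof (intro allI impI)
  define G where "G t = gram_gap (W t) (M t)" for t
  have G_ode: "(G has_vector_derivative - 4 *\<^sub>R G t) (at t within {0..})" if "t \<ge> 0" for t
  proof -
    have M_invertible_symmetric: "invertible (M t)" "transpose (M t) = M t"
      using M_spd[OF that] spd_invertible spd_def by auto
    have "W' t = 2 *\<^sub>R ((1/2) *\<^sub>R W' t)" and "M' t = 2 *\<^sub>R (\<tau> *\<^sub>R M' t)"
      by (simp_all add: tau)
    then have "W t ** transpose (W' t) + W' t ** transpose (W t) - (M t ** M' t + M' t ** M t)
        = - 4 *\<^sub>R G t"
      unfolding G_def W_ode[OF that] M_ode[OF that]
      using A_spd M_invertible_symmetric by (intro gram_gap_flow_identity)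
        (auto simp: spd_def matrix_mul_matrix_inv symmetric_matrix_inv)
    then show ?thesis
      using has_vector_derivative_gram_gap[OF W_deriv[OF that] M_deriv[OF that]]
      by (simp add: G_def[abs_def])
  qed
  fix t :: real
  assume "t \<ge> 0"
  have "G t = exp (- 4 * t) *\<^sub>R G 0"
    using has_vector_derivative_scaleR_self_eq_exp[OF G_ode \<open>t \<ge> 0\<close>] .
  moreover have "exp (- 8 * t) = exp (- 4 * t) * exp (- 4 * t)"
    by (simp flip: exp_add)
  ultimately show "Lfun (W t) (M t) = Lfun (W 0) (M 0) * exp (- 8 * t)"
    by (simp add: Lfun_gram_gap G_def[symmetric] matrix_scalar_ac trace_scaleR
        flip: scalar_matrix_assoc)
qed

end
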